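(* Let $L$ be a friendly labeling function, $T$ a tree with root edge, and $e$ an interior edge of $T$. If $(l_1,m,n_1)$ and $(l_2,m,n_2)$ are consistent labelings of $T$ (same label $m$ on $e$), then $(l_1,m,n_2)$ and $(l_2,m,n_1)$ are consistent labelings of $T$ and the quadratic binomial $$q_{(l_1,m,n_1)}\,q_{(l_2,m,n_2)}-q_{(l_1,m,n_2)}\,q_{(l_2,m,n_1)}$$ lies in the toric ideal $I_{T,L}$.
   Context: Let $G$ be a finite abelian group written additively, $\mathcal{L}$ a finite set, $L:G\to\mathcal{L}$ a function. A tree with root edge is a finite tree $T$ with a distinguished leaf $\rho$; the edge at $\rho$ is the root edge. Every vertex $v\neq\rho$ has a unique parent edge (first edge on the path from $v$ to $\rho$); other edges at $v$ are child edges. Vertices that are neither $\rho$ nor leaves are interior vertices; an edge is interior if both endpoints are interior vertices. $E(T)$ is the edge set. An edge $e'$ is below $e$ if $e$ lies on the path from $\rho$ to $e'$ (so $e$ is below itself). A map $h:E(T)\to G$ is a consistent assignment if for every interior vertex $v$, $h(\text{parent edge of }v)=\sum h(\text{child edges of }v)$. ${\rm im}(L^T)=\{L\circ h: h\text{ consistent}\}$ is the set of consistent labelings. $I_{T,L}$ is the kernel of $\mathbb{C}[q_\lambda:\lambda\in{\rm im}(L^T)]\to\mathbb{C}[a^{(e)}_l:e\in E(T),l\in\mathcal{L}]$, $q_\lambda\mapsto\prod_{e\in E(T)}a^{(e)}_{\lambda(e)}$. For an edge $e$, $T_{e,-}$ is the tree formed by the edges below $e$ and $T_{e,+}$ the tree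 formed by $e$ and all edges not below $e$. A labeling of $T$ is written as a triple $(l,m,n)$, where $l$ is its restriction to the edges of $T_{e,-}$ other than $e$, $m$ its value on $e$, and $n$ its restriction to the edges of $T_{e,+}$ other than $e$. Friendliness: for $m\ge3$ let $Z_m=\{(g_1,\dots,g_m)\in G^m: g_1+\cdots+g_{m-1}=g_m\}$ and $\widetilde{L}(g_1,\dots,g_m)=(L(g_1),\dots,L(g_m))$; $L$ is $m$-friendly if for every $l\in\widetilde{L}(Z_m)$ and every $i$, the set of $i$-th coordinates of elements of $\widetilde{L}^{-1}(l)$ equals $L^{-1}(l_i)$; $L$ is friendly if it is $m$-friendly for all $m\ge3$. *)

theory Defs
  imports Complex_Main "HOL-Library.Poly_Mapping" "HOL-Library.FuncSet"
begin

definition adj :: "'v set set \<Rightarrow> 'v \<Rightarrow> 'v \<Rightarrow> bool" where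
  "adj E u w \<longleftrightarrow> {u, w} \<in> E"

definition is_path :: "'v set set \<Rightarrow> 'v list \<Rightarrow> bool" where
  "is_path E xs \<longleftrightarrow> xs \<noteq> [] \<and> distinct xs \<and>
     (\<forall>i. Suc i < length xs \<longrightarrow> {xs ! i, xs ! Suc i} \<in> E)"

definition path_edges :: "'v list \<Rightarrow> 'v set set" where
  "path_edges xs = {{xs ! i, xs ! Suc i} | i. Suc i < length xs}"

definition connected_graph :: "'v set \<Rightarrow> 'v set set \<Rightarrow> bool" where
  "connected_graph V E \<longleftrightarrow>
     (\<forall>u\<in>V. \<forall>w\<in>V. \<exists>xs. is_path E xs \<and> hd xs = u \<and> last xs = w)"

text \<open>A finite tree: a finite connected simple graph without cycles; acyclicity is
expressed as uniqueness of paths between any two vertices.\<close>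

definition finite_tree :: "'v set \<Rightarrow> 'v set set \<Rightarrow> bool" where
  "finite_tree V E \<longleftrightarrow> finite V \<and> V \<noteq> {} \<and>
     (\<forall>e\<in>E. \<exists>u w. u \<noteq> w \<and> u \<in> V \<and> w \<in> V \<and> e = {u, w}) \<and>
     connected_graph V E \<and>
     (\<forall>xs ys. is_path E xs \<longrightarrow> is_path E ys \<longrightarrow> hd xs = hd ys \<longrightarrow> last xs = last ys
        \<longrightarrow> xs = ys)"

definition degree :: "'v set set \<Rightarrow> 'v \<Rightarrow> nat" where
  "degree E v = card {e\<in>E. v \<in> e}"

definition is_leaf :: "'v set set \<Rightarrow> 'v \<Rightarrow> bool" where
  "is_leaf E v \<longleftrightarrow> degree E v = 1"

text \<open>A tree with root edge: a finite tree with a distinguished leaf \<rho>.\<close>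

definition rooted_tree :: "'v set \<Rightarrow> 'v set set \<Rightarrow> 'v \<Rightarrow> bool" where
  "rooted_tree V E \<rho> \<longleftrightarrow> finite_tree V E \<and> \<rho> \<in> V \<and> is_leaf E \<rho>"

definition parent_edge :: "'v set set \<Rightarrow> 'v \<Rightarrow> 'v \<Rightarrow> 'v set" where
  "parent_edge E \<rho> v = (THE e. \<exists>xs. is_path E xs \<and> hd xs = v \<and> last xs = \<rho> \<and>
      2 \<le> length xs \<and> e = {xs ! 0, xs ! 1})"

definition child_edges :: "'v set set \<Rightarrow> 'v \<Rightarrow> 'v \<Rightarrow> 'v set set" where
  "child_edges E \<rho> v = {e\<in>E. v \<in> e \<and> e \<noteq> parent_edge E \<rho> v}"

definition interior_vertex :: "'v set \<Rightarrow> 'v set set \<Rightarrow> 'v \<Rightarrow> 'v \<Rightarrow> bool" where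
  "interior_vertex V E \<rho> v \<longleftrightarrow> v \<in> V \<and> v \<noteq> \<rho> \<and> \<not> is_leaf E v"

definition interior_edge :: "'v set \<Rightarrow> 'v set set \<Rightarrow> 'v \<Rightarrow> 'v set \<Rightarrow> bool" where
  "interior_edge V E \<rho> e \<longleftrightarrow> e \<in> E \<and> (\<forall>v\<in>e. interior_vertex V E \<rho> v)"

text \<open>e' is below e iff e lies on the path from \<rho> to e' (the path from \<rho> whose last
edge is e'). In particular e is below itself.\<close>

definition below :: "'v set set \<Rightarrow> 'v \<Rightarrow> 'v set \<Rightarrow> 'v set \<Rightarrow> bool" where
  "below E \<rho> e e' \<longleftrightarrow> (\<exists>xs. is_path E xs \<and> hd xs = \<rho> \<and> 2 \<le> length xs \<and>
      {xs ! (length xs - 2), xs ! (length xs - 1)} = e' \<and> e \<in> path_edges xs)"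

definition consistent_assignment ::
  "'v set \<Rightarrow> 'v set set \<Rightarrow> 'v \<Rightarrow> ('v set \<Rightarrow> 'g::ab_group_add) \<Rightarrow> bool" where
  "consistent_assignment V E \<rho> h \<longleftrightarrow>
     (\<forall>v. interior_vertex V E \<rho> v \<longrightarrow>
        h (parent_edge E \<rho> v) = (\<Sum>e\<in>child_edges E \<rho> v. h e))"

text \<open>Labelings are functions on E (extensional, i.e. undefined outside E).\<close>

definition consistent_labelings ::
  "'v set \<Rightarrow> 'v set set \<Rightarrow> 'v \<Rightarrow> ('g::ab_group_add \<Rightarrow> 'l) \<Rightarrow> ('v set \<Rightarrow> 'l) set" where
  "consistent_labelings V E \<rho> L =
     {(\<lambda>e\<in>E. L (h e)) | h. consistent_assignment V E \<rho> h}"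

text \<open>Given labelings lam1 = (l1,m,n1), lam2 = (l2,m,n2) (with respect to edge e),
glue lam1 lam2 is (l1,m,n2): it agrees with lam1 on the edges of T_{e,-} (edges below e,
including e) and with lam2 on the remaining edges.\<close>

definition glue :: "'v set set \<Rightarrow> 'v \<Rightarrow> 'v set \<Rightarrow> ('v set \<Rightarrow> 'l) \<Rightarrow> ('v set \<Rightarrow> 'l)
    \<Rightarrow> ('v set \<Rightarrow> 'l)" where
  "glue E \<rho> e lam1 lam2 = (\<lambda>e'\<in>E. if below E \<rho> e e' then lam1 e' else lam2 e')"

definition Zm :: "nat \<Rightarrow> ('g::ab_group_add) list set" where
  "Zm m = {gs. length gs = m \<and> sum_list (take (m - 1) gs) = gs ! (m - 1)}"

definition m_friendly :: "nat \<Rightarrow> ('g::ab_group_add \<Rightarrow> 'l) \<Rightarrow> bool" where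
  "m_friendly m L \<longleftrightarrow>
     (\<forall>l \<in> map L ` Zm m. \<forall>i < m.
        {gs ! i | gs. gs \<in> Zm m \<and> map L gs = l} = L -` {l ! i})"

definition friendly :: "('g::ab_group_add \<Rightarrow> 'l) \<Rightarrow> bool" where
  "friendly L \<longleftrightarrow> (\<forall>m\<ge>3. m_friendly m L)"

text \<open>Multivariate polynomials over \<complex> are represented as finitely supported maps
from monomials (finitely supported exponent maps from variables to nat) to coefficients.\<close>

type_synonym 'x cpoly = "('x \<Rightarrow>\<^sub>0 nat) \<Rightarrow>\<^sub>0 complex"

definition Var :: "'x \<Rightarrow> 'x cpoly" where
  "Var x = Poly_Mapping.single (Poly_Mapping.single x 1) 1"

definition vars :: "'x cpoly \<Rightarrow> 'x set" where
  "vars p = (\<Union>m\<in>Poly_Mapping.keys p. Poly_Mapping.keys m)"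

text \<open>The C-algebra homomorphism sending each variable x to the polynomial f x.\<close>

definition subst_hom :: "('x \<Rightarrow> 'y cpoly) \<Rightarrow> 'x cpoly \<Rightarrow> 'y cpoly" where
  "subst_hom f p = (\<Sum>m\<in>Poly_Mapping.keys p. Poly_Mapping.single 0 (Poly_Mapping.lookup p m) *
                       (\<Prod>x\<in>Poly_Mapping.keys m. f x ^ Poly_Mapping.lookup m x))"

text \<open>q_\<lambda> \<mapsto> \<Prod>_{e\<in>E} a^{(e)}_{\<lambda>(e)}; the variable a^{(e)}_l is indexed by (e,l).\<close>

definition param_map :: "'v set set \<Rightarrow> ('v set \<Rightarrow> 'l) \<Rightarrow> ('v set \<times> 'l) cpoly" where
  "param_map E lam = (\<Prod>e\<in>E. Var (e, lam e))"

definition toric_ideal ::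
  "'v set \<Rightarrow> 'v set set \<Rightarrow> 'v \<Rightarrow> ('g::ab_group_add \<Rightarrow> 'l) \<Rightarrow> ('v set \<Rightarrow> 'l) cpoly set" where
  "toric_ideal V E \<rho> L =
     {p. vars p \<subseteq> consistent_labelings V E \<rho> L \<and> subst_hom (param_map E) p = 0}"

end

theory Submission
  imports Defs "HOL-Library.Sublist"
begin

(*
  Record an assignment by its values on vertices: f v is the group element on the parent edge of v,
  and consistency says that f v is the sum of f over the children of v. Let e be the parent edge
  of b. Friendliness says that an element with the same label as a sum is itself a sum of elements
  with the same labels as the summands. Applied at b and then recursively down the subtree of b,
  it turns h1 into an assignment that has value h2 e at e and the labels of h1 below e; using it
  below e and h2 elsewhere gives a consistent assignment with labeling (l1, m, n2). On every edge
  the two glued labelings carry the labels of lam1 and lam2 in some order, so both monomials of the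
  binomial have the same image under the parametrization.
*)

lemma distinct_list_map_exists:
  "distinct xs \<Longrightarrow> length ys = length xs \<Longrightarrow> \<exists>f. map f xs = ys"
proof (induction xs arbitrary: ys)
  case (Cons x xs)
  then obtain y ys' where ys: "ys = y # ys'"
    by (cases ys) auto
  with Cons obtain f where "map f xs = ys'"
    by auto
  then have "map (f(x := y)) (x # xs) = ys"
    using Cons.prems(1) ys by simp
  then show ?case
    by blast
qed simp

lemma friendly_sum_list:
  fixes L :: "'g::ab_group_add \<Rightarrow> 'l"
  assumes "friendly L" and "xs \<noteq> []" and "L g = L (sum_list xs)"
  obtains ys where "map L ys = map L xs" and "sum_list ys = g"
proof (cases "length xs = 1")
  case True
  then obtain x where "xs = [x]"
    by (metis One_nat_def length_0_conv length_Suc_conv)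
  then show ?thesis
    using that[of "[g]"] assms(3) by simp
next
  case False
  define k where "k = length xs"
  define gs where "gs = xs @ [sum_list xs]"
  have "length xs \<noteq> 0"
    using assms(2) by simp
  then have "3 \<le> Suc k"
    using False unfolding k_def by linarith
  then have friendly_k: "m_friendly (Suc k) L"
    using assms(1) unfolding friendly_def by blast
  have "gs \<in> Zm (Suc k)"
    by (simp add: Zm_def gs_def k_def nth_append)
  then have "{gs' ! k | gs'. gs' \<in> Zm (Suc k) \<and> map L gs' = map L gs} = L -` {map L gs ! k}"
    using friendly_k unfolding m_friendly_def by blast
  moreover have "map L gs ! k = L g"
    using assms(3) by (simp add: gs_def k_def nth_append)
  ultimately have "g \<in> {gs' ! k | gs'. gs' \<in> Zm (Suc k) \<and> map L gs' = map L gs}"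
    by simp
  then obtain gs' where gs': "gs' \<in> Zm (Suc k)" "map L gs' = map L gs" "gs' ! k = g"
    by blast
  show ?thesis
  proof (rule that)
    show "map L (take k gs') = map L xs"
      using gs'(2) by (simp add: take_map[symmetric] gs_def k_def)
    show "sum_list (take k gs') = g"
      using gs'(1,3) by (simp add: Zm_def)
  qed
qed

lemma friendly_sum:
  fixes L :: "'g::ab_group_add \<Rightarrow> 'l"
  assumes "friendly L" and "finite C" and "C \<noteq> {}" and "L g = L (\<Sum>c\<in>C. x c)"
  obtains y where "\<And>c. c \<in> C \<Longrightarrow> L (y c) = L (x c)" and "(\<Sum>c\<in>C. y c) = g"
proof -
  obtain cs where cs: "distinct cs" "set cs = C"
    using finite_distinct_list[OF assms(2)] by blast
  then have "map x cs \<noteq> []" and "L g = L (sum_list (map x cs))"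
    using assms(3,4) by (auto simp: sum_list_distinct_conv_sum_set)
  then obtain ys where ys: "map L ys = map L (map x cs)" "sum_list ys = g"
    using friendly_sum_list[OF assms(1)] by blast
  moreover obtain y where y: "map y cs = ys"
    using distinct_list_map_exists[OF cs(1), of ys] ys(1) by (metis length_map)
  ultimately have "map (L \<circ> y) cs = map (L \<circ> x) cs"
    by (simp flip: map_map)
  then show ?thesis
    using that[of y] cs ys(2) y by (auto simp: sum_list_distinct_conv_sum_set)
qed

lemma is_path_drop: "is_path E xs \<Longrightarrow> n < length xs \<Longrightarrow> is_path E (drop n xs)"
  unfolding is_path_def by auto

lemma is_path_take: "is_path E xs \<Longrightarrow> 0 < n \<Longrightarrow> is_path E (take n xs)"
  unfolding is_path_def by auto

lemma is_path_Cons: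
  "is_path E xs \<Longrightarrow> {x, hd xs} \<in> E \<Longrightarrow> x \<notin> set xs \<Longrightarrow> is_path E (x # xs)"
  unfolding is_path_def by (auto simp: hd_conv_nth nth_Cons split: nat.splits)

lemma is_path_rev:
  assumes "is_path E xs"
  shows "is_path E (rev xs)"
  unfolding is_path_def
proof (intro conjI allI impI)
  fix i
  assume i: "Suc i < length (rev xs)"
  define j where "j = length xs - Suc (Suc i)"
  have "Suc j < length xs" and "rev xs ! i = xs ! Suc j" and "rev xs ! Suc i = xs ! j"
    using i by (simp_all add: j_def rev_nth Suc_diff_Suc)
  then show "{rev xs ! i, rev xs ! Suc i} \<in> E"
    using assms unfolding is_path_def by (metis insert_commute)
qed (use assms in \<open>auto simp: is_path_def\<close>)

lemma path_edges_iff: "e \<in> path_edges xs \<longleftrightarrow> (\<exists>i. Suc i < length xs \<and> e = {xs ! i, xs ! Suc i})"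
  unfolding path_edges_def by blast

lemma path_edges_rev: "path_edges (rev xs) = path_edges xs"
proof -
  have "path_edges (rev ys) \<subseteq> path_edges ys" for ys :: "'a list"
  proof
    fix e
    assume "e \<in> path_edges (rev ys)"
    then obtain i where i: "Suc i < length ys" and e: "e = {rev ys ! i, rev ys ! Suc i}"
      unfolding path_edges_iff by auto
    define j where "j = length ys - Suc (Suc i)"
    have "Suc j < length ys" and "e = {ys ! j, ys ! Suc j}"
      using i e by (auto simp: j_def rev_nth Suc_diff_Suc)
    then show "e \<in> path_edges ys"
      unfolding path_edges_iff by blast
  qed
  from this[of xs] this[of "rev xs"] show ?thesis
    by simp
qed

lemma path_edges_drop: "path_edges (drop n xs) \<subseteq> path_edges xs"
proof
  fix e
  assume "e \<in> path_edges (drop n xs)"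
  then obtain i where "Suc i < length (drop n xs)" and "e = {drop n xs ! i, drop n xs ! Suc i}"
    unfolding path_edges_iff by blast
  then have "Suc (n + i) < length xs" and "e = {xs ! (n + i), xs ! Suc (n + i)}"
    by auto
  then show "e \<in> path_edges xs"
    unfolding path_edges_iff by blast
qed

locale tree_with_root_edge =
  fixes V :: "'v set" and E :: "'v set set" and r :: 'v
  assumes rooted: "rooted_tree V E r"
begin

abbreviation pe :: "'v \<Rightarrow> 'v set" where
  "pe \<equiv> parent_edge E r"

lemma finite_V: "finite V"
  using rooted unfolding rooted_tree_def finite_tree_def by blast

lemma root_in_V: "r \<in> V"
  using rooted unfolding rooted_tree_def by blast

lemma edge_cases: "e \<in> E \<Longrightarrow> \<exists>u w. u \<noteq> w \<and> u \<in> V \<and> w \<in> V \<and> e = {u, w}"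
  using rooted unfolding rooted_tree_def finite_tree_def by blast

lemma edge_in_V: "{x, y} \<in> E \<Longrightarrow> x \<in> V"
  using edge_cases by (metis doubleton_eq_iff)

lemma finite_E: "finite E"
proof -
  have "E \<subseteq> Pow V"
    using edge_cases by blast
  then show ?thesis
    using finite_V by (simp add: finite_subset)
qed

lemma path_exists: "u \<in> V \<Longrightarrow> w \<in> V \<Longrightarrow> \<exists>xs. is_path E xs \<and> hd xs = u \<and> last xs = w"
  using rooted unfolding rooted_tree_def finite_tree_def connected_graph_def by blast

lemma path_unique:
  "is_path E xs \<Longrightarrow> is_path E ys \<Longrightarrow> hd xs = hd ys \<Longrightarrow> last xs = last ys \<Longrightarrow> xs = ys"
  using rooted unfolding rooted_tree_def finite_tree_def by blast

definition root_path :: "'v \<Rightarrow> 'v list" where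
  "root_path v = (THE xs. is_path E xs \<and> hd xs = v \<and> last xs = r)"

lemma root_path_eq: "is_path E xs \<Longrightarrow> hd xs = v \<Longrightarrow> last xs = r \<Longrightarrow> root_path v = xs"
  unfolding root_path_def by (rule the_equality) (auto intro: path_unique)

lemma root_path_spec:
  assumes "v \<in> V"
  shows "is_path E (root_path v)" and "hd (root_path v) = v" and "last (root_path v) = r"
  using path_exists[OF assms root_in_V] root_path_eq by metis+

lemma root_path_not_Nil: "v \<in> V \<Longrightarrow> root_path v \<noteq> []"
  using root_path_spec(1) unfolding is_path_def by blast

lemma distinct_root_path: "v \<in> V \<Longrightarrow> distinct (root_path v)"
  using root_path_spec(1) unfolding is_path_def by blast

lemma root_path_nth_0: "v \<in> V \<Longrightarrow> root_path v ! 0 = v"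
  using root_path_spec(2) root_path_not_Nil by (metis hd_conv_nth)

lemma root_in_root_path: "v \<in> V \<Longrightarrow> r \<in> set (root_path v)"
  using root_path_spec(3) root_path_not_Nil by (metis last_in_set)

lemma root_path_root: "root_path r = [r]"
  by (rule root_path_eq) (auto simp: is_path_def)

lemma length_root_path:
  assumes "v \<in> V" and "v \<noteq> r"
  shows "2 \<le> length (root_path v)"
proof -
  have "root_path v \<noteq> [v]"
    using root_path_spec(3)[OF assms(1)] assms(2) by auto
  then show ?thesis
    using root_path_not_Nil[OF assms(1)] root_path_spec(2)[OF assms(1)]
    by (cases "root_path v") (auto simp: Suc_le_eq)
qed

lemma set_root_path_subset: "v \<in> V \<Longrightarrow> set (root_path v) \<subseteq> V"
proof
  fix x
  assume v: "v \<in> V" and "x \<in> set (root_path v)"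
  then obtain i where i: "i < length (root_path v)" and x: "x = root_path v ! i"
    by (metis in_set_conv_nth)
  show "x \<in> V"
  proof (cases "Suc i < length (root_path v)")
    case True
    then show ?thesis
      using root_path_spec(1)[OF v] edge_in_V[of x] x unfolding is_path_def by blast
  next
    case False
    then have "i = length (root_path v) - 1"
      using i by linarith
    then have "x = last (root_path v)"
      using x root_path_not_Nil[OF v] by (simp add: last_conv_nth)
    then show ?thesis
      using root_path_spec(3)[OF v] root_in_V by simp
  qed
qed

lemma root_path_suffix:
  assumes "v \<in> V" and "suffix s (root_path v)" and "s \<noteq> []"
  shows "root_path (hd s) = s"
proof -
  obtain zs where zs: "root_path v = zs @ s"
    using assms(2) by (auto elim: suffixE)
  then have "s = drop (length zs) (root_path v)" and "length zs < length (root_path v)"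
    using assms(3) by simp_all
  then have "is_path E s"
    using root_path_spec(1)[OF assms(1)] by (metis is_path_drop)
  moreover have "last s = r"
    using root_path_spec(3)[OF assms(1)] zs assms(3) by simp
  ultimately show ?thesis
    using root_path_eq by blast
qed

definition parent :: "'v \<Rightarrow> 'v" where
  "parent v = root_path v ! 1"

lemma root_path_Cons:
  assumes "v \<in> V" and "v \<noteq> r"
  shows "root_path v = v # root_path (parent v)"
proof -
  obtain x y ys where xy: "root_path v = x # y # ys"
    using length_root_path[OF assms] by (auto simp: numeral_2_eq_2 Suc_le_length_iff)
  then have "tl (root_path v) \<noteq> []" and "hd (tl (root_path v)) = parent v"
    by (simp_all add: parent_def)
  then have "root_path (parent v) = tl (root_path v)"
    using root_path_suffix[OF assms(1) suffix_tl] by simp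
  then show ?thesis
    using xy root_path_spec(2)[OF assms(1)] by simp
qed

lemma parent_edge_eq:
  assumes v: "v \<in> V" "v \<noteq> r"
  shows "pe v = {v, parent v}"
  unfolding parent_edge_def
proof (rule the_equality)
  show "\<exists>xs. is_path E xs \<and> hd xs = v \<and> last xs = r \<and> 2 \<le> length xs
      \<and> {v, parent v} = {xs ! 0, xs ! 1}"
    using root_path_spec[OF v(1)] length_root_path[OF v] root_path_nth_0[OF v(1)]
    by (intro exI[of _ "root_path v"]) (simp add: parent_def)
next
  fix e
  assume "\<exists>xs. is_path E xs \<and> hd xs = v \<and> last xs = r \<and> 2 \<le> length xs \<and> e = {xs ! 0, xs ! 1}"
  then obtain xs where xs: "is_path E xs" "hd xs = v" "last xs = r" "e = {xs ! 0, xs ! 1}"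
    by blast
  then have "root_path v = xs"
    by (intro root_path_eq)
  then show "e = {v, parent v}"
    using xs(4) root_path_nth_0[OF v(1)] unfolding parent_def by simp
qed

lemma parent_edge_in_E:
  assumes "v \<in> V" and "v \<noteq> r"
  shows "pe v \<in> E"
proof -
  have "Suc 0 < length (root_path v)"
    using length_root_path[OF assms] by simp
  then have "{root_path v ! 0, root_path v ! Suc 0} \<in> E"
    using root_path_spec(1)[OF assms(1)] unfolding is_path_def by blast
  then show ?thesis
    using assms parent_edge_eq root_path_nth_0 by (simp add: parent_def)
qed

lemma parent_edge_inj: "inj_on pe (V - {r})"
proof (rule inj_onI, rule ccontr)
  fix u w
  assume u: "u \<in> V - {r}" and w: "w \<in> V - {r}" and eq: "pe u = pe w" and "u \<noteq> w"
  moreover have "{u, parent u} = {w, parent w}"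
    using u w eq parent_edge_eq by simp
  ultimately have "w = parent u" and "u = parent w"
    by (auto simp: doubleton_eq_iff)
  then have "root_path u = u # root_path w" and "root_path w = w # root_path u"
    using root_path_Cons[of u] root_path_Cons[of w] u w by simp_all
  then have "length (root_path u) = Suc (length (root_path w))"
    and "length (root_path w) = Suc (length (root_path u))"
    by (metis length_Cons)+
  then show False
    by simp
qed

definition children :: "'v \<Rightarrow> 'v set" where
  "children v = {u \<in> V. root_path u = u # root_path v}"

lemma child_not_root: "v \<in> V \<Longrightarrow> u \<in> children v \<Longrightarrow> u \<noteq> r"
  using root_in_root_path distinct_root_path unfolding children_def by fastforce

lemma parent_of_child: "v \<in> V \<Longrightarrow> u \<in> children v \<Longrightarrow> parent u = v"
  using root_path_nth_0 unfolding children_def parent_def by auto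

lemma parent_edge_child: "v \<in> V \<Longrightarrow> u \<in> children v \<Longrightarrow> pe u = {u, v}"
  using parent_edge_eq parent_of_child child_not_root unfolding children_def by blast

lemma neighbour_in_children:
  assumes v: "v \<in> V" and uv: "{u, v} \<in> E" and u_not_parent: "u \<noteq> parent v" and "u \<noteq> v"
  shows "u \<in> children v"
proof -
  have "u \<notin> set (root_path v)"
  proof
    assume "u \<in> set (root_path v)"
    then obtain j where j: "j < length (root_path v)" "root_path v ! j = u"
      by (metis in_set_conv_nth)
    have "is_path E (take (Suc j) (root_path v))"
      using is_path_take root_path_spec(1)[OF v] by blast
    moreover have "is_path E [v, u]"
      using uv \<open>u \<noteq> v\<close> by (auto simp: is_path_def insert_commute less_Suc_eq)
    moreover have "hd (take (Suc j) (root_path v)) = v"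
      using root_path_spec(2)[OF v] by (simp add: hd_take)
    moreover have "last (take (Suc j) (root_path v)) = u"
      using j by (simp add: take_Suc_conv_app_nth)
    ultimately have "take (Suc j) (root_path v) = [v, u]"
      by (intro path_unique) simp_all
    then have "length (take (Suc j) (root_path v)) = 2"
      by simp
    then have "j = 1"
      using j by simp
    then show False
      using j u_not_parent unfolding parent_def by simp
  qed
  then have "is_path E (u # root_path v)"
    using is_path_Cons root_path_spec(1,2)[OF v] uv by (metis insert_commute)
  then have "root_path u = u # root_path v"
    using root_path_eq root_path_spec(3)[OF v] root_path_not_Nil[OF v] by simp
  then show ?thesis
    using edge_in_V uv unfolding children_def by blast
qed

lemma child_edges_eq:
  assumes v: "v \<in> V" "v \<noteq> r"
  shows "child_edges E r v = pe ` children v"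
proof
  show "child_edges E r v \<subseteq> pe ` children v"
  proof
    fix c
    assume c: "c \<in> child_edges E r v"
    then have "c \<in> E" and "v \<in> c"
      unfolding child_edges_def by auto
    then obtain u where "c = {u, v}" and "u \<noteq> v"
      using edge_cases by blast
    moreover have "u \<noteq> parent v"
      using c \<open>c = {u, v}\<close> parent_edge_eq[OF v] unfolding child_edges_def by (auto simp: insert_commute)
    ultimately have "u \<in> children v"
      using neighbour_in_children v \<open>c \<in> E\<close> by blast
    then show "c \<in> pe ` children v"
      using \<open>c = {u, v}\<close> parent_edge_child v by blast
  qed
  show "pe ` children v \<subseteq> child_edges E r v"
  proof
    fix c
    assume "c \<in> pe ` children v"
    then obtain u where u: "u \<in> children v" and c: "c = pe u"
      by blast
    have "u \<in> V" and "u \<noteq> r"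
      using u child_not_root v unfolding children_def by auto
    then have "c \<in> E" and "c = {u, v}"
      using c parent_edge_in_E[of u] parent_edge_child[OF v(1) u] by simp_all
    moreover have "v \<in> set (root_path v)"
      using root_path_spec(2)[OF v(1)] root_path_not_Nil[OF v(1)] hd_in_set by metis
    then have "u \<noteq> v"
      using u distinct_root_path[OF \<open>u \<in> V\<close>] unfolding children_def by auto
    then have "c \<noteq> pe v"
      using inj_onD[OF parent_edge_inj, of u v] c \<open>u \<in> V\<close> \<open>u \<noteq> r\<close> v by auto
    ultimately show "c \<in> child_edges E r v"
      unfolding child_edges_def by blast
  qed
qed

lemma edge_is_parent_edge:
  assumes "e \<in> E"
  shows "e \<in> pe ` (V - {r})"
proof -
  obtain x where x: "x \<in> e" "x \<in> V" "x \<noteq> r"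
    using edge_cases[OF assms] by blast
  show ?thesis
  proof (cases "e = pe x")
    case False
    then have "e \<in> child_edges E r x"
      using assms x unfolding child_edges_def by blast
    then obtain u where "u \<in> children x" and "e = pe u"
      using child_edges_eq x by blast
    then show ?thesis
      using child_not_root x unfolding children_def by blast
  qed (use x in blast)
qed

lemma interior_vertex_iff_children:
  assumes w: "w \<in> V" "w \<noteq> r"
  shows "interior_vertex V E r w \<longleftrightarrow> children w \<noteq> {}"
proof -
  have "{e \<in> E. w \<in> e} = insert (pe w) (child_edges E r w)"
    using parent_edge_in_E[OF w] parent_edge_eq[OF w] unfolding child_edges_def by auto
  moreover have "pe w \<notin> child_edges E r w"
    unfolding child_edges_def by blast
  moreover have "finite (child_edges E r w)"
    using finite_E unfolding child_edges_def by simp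
  ultimately have "degree E w = Suc (card (child_edges E r w))"
    unfolding degree_def by simp
  then show ?thesis
    using w child_edges_eq[OF w] \<open>finite (child_edges E r w)\<close>
    unfolding interior_vertex_def is_leaf_def by auto
qed

definition subtree :: "'v \<Rightarrow> 'v set" where
  "subtree w = {u \<in> V. suffix (root_path w) (root_path u)}"

lemma self_in_subtree: "w \<in> V \<Longrightarrow> w \<in> subtree w"
  unfolding subtree_def by simp

lemma child_in_subtree: "v \<in> subtree w \<Longrightarrow> u \<in> children v \<Longrightarrow> u \<in> subtree w"
  unfolding subtree_def children_def by (auto intro: suffix_ConsI)

lemma child_in_subtree_cases:
  assumes "b \<in> V" and "v \<in> V" and "u \<in> children v" and "u \<in> subtree b"
  shows "u = b \<or> v \<in> subtree b"
proof -
  have "u \<in> V"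
    using assms(3) unfolding children_def by blast
  have "root_path b = root_path u \<or> suffix (root_path b) (root_path v)"
    using assms(3,4) unfolding subtree_def children_def by (auto simp: suffix_Cons)
  then show ?thesis
  proof
    assume "root_path b = root_path u"
    then show ?thesis
      using root_path_nth_0[OF \<open>u \<in> V\<close>] root_path_nth_0[OF assms(1)] by simp
  qed (use assms(2) in \<open>simp add: subtree_def\<close>)
qed

lemma subtree_cases:
  assumes w: "w \<in> V" and x: "x \<in> subtree w" "x \<noteq> w"
  obtains u where "u \<in> children w" and "x \<in> subtree u"
proof -
  have "x \<in> V"
    using x unfolding subtree_def by blast
  obtain zs where zs: "root_path x = zs @ root_path w"
    using x unfolding subtree_def by (auto elim: suffixE)
  have "zs \<noteq> []"
  proof
    assume "zs = []"
    then have "root_path x ! 0 = root_path w ! 0"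
      using zs by simp
    then show False
      using root_path_nth_0[OF \<open>x \<in> V\<close>] root_path_nth_0[OF w] x(2) by simp
  qed
  then obtain ys u where "zs = ys @ [u]"
    by (metis rev_exhaust)
  then have u_suffix: "suffix (u # root_path w) (root_path x)" and "u \<in> set (root_path x)"
    using zs by (simp_all add: suffix_def)
  then have "root_path u = u # root_path w" and "u \<in> V"
    using root_path_suffix[OF \<open>x \<in> V\<close> u_suffix] set_root_path_subset[OF \<open>x \<in> V\<close>] by auto
  then show ?thesis
    using that u_suffix \<open>x \<in> V\<close> unfolding children_def subtree_def by simp
qed

lemma subtree_child_unique:
  assumes "u \<in> children w" "u' \<in> children w" "x \<in> subtree u" "x \<in> subtree u'"
  shows "u = u'"
proof -
  have "suffix (u # root_path w) (root_path x)" and "suffix (u' # root_path w) (root_path x)"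
    using assms unfolding subtree_def children_def by auto
  then show ?thesis
    by (metis suffix_length_suffix suffix_order.eq_iff length_Cons order_refl list.inject)
qed

lemma parent_not_in_child_subtree: "u \<in> children w \<Longrightarrow> w \<notin> subtree u"
  unfolding subtree_def children_def using suffix_length_le by fastforce

lemma length_root_path_le_card: "v \<in> V \<Longrightarrow> length (root_path v) \<le> card V"
  using set_root_path_subset distinct_root_path finite_V
  by (metis card_mono distinct_card)

lemma root_path_of_path_from_root:
  assumes xs: "is_path E xs" "hd xs = r" "2 \<le> length xs"
  shows "last xs \<in> V - {r}" and "root_path (last xs) = rev xs"
proof -
  have "xs \<noteq> []"
    using xs(3) by auto
  then show path: "root_path (last xs) = rev xs"
    using xs by (intro root_path_eq) (simp_all add: is_path_rev hd_rev last_rev)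
  have "Suc (length xs - 2) < length xs" and "Suc (length xs - 2) = length xs - 1"
    using xs(3) by simp_all
  then have "{xs ! (length xs - 2), last xs} \<in> E"
    using xs(1) \<open>xs \<noteq> []\<close> unfolding is_path_def by (metis last_conv_nth)
  then have "last xs \<in> V"
    using edge_in_V by (metis insert_commute)
  moreover have "last xs \<noteq> r"
  proof
    assume "last xs = r"
    then have "xs = [r]"
      using path root_path_root by simp
    then show False
      using xs(3) by simp
  qed
  ultimately show "last xs \<in> V - {r}"
    by blast
qed

lemma below_iff_root_path:
  "below E r e e' \<longleftrightarrow> (\<exists>u \<in> V - {r}. e' = pe u \<and> e \<in> path_edges (root_path u))"
proof
  assume "below E r e e'"
  then obtain xs where xs: "is_path E xs" "hd xs = r" "2 \<le> length xs"
    and last_edge: "{xs ! (length xs - 2), xs ! (length xs - 1)} = e'"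
    and e: "e \<in> path_edges xs"
    unfolding below_def by blast
  define u where "u = last xs"
  have u: "u \<in> V" "u \<noteq> r" and u_path: "root_path u = rev xs"
    using root_path_of_path_from_root[OF xs] unfolding u_def by auto
  have "parent u = xs ! (length xs - 2)"
    using xs(3) u_path unfolding parent_def by (simp add: rev_nth numeral_2_eq_2 Suc_diff_Suc)
  moreover have "xs ! (length xs - 1) = u"
    using xs(3) last_conv_nth[of xs] unfolding u_def by fastforce
  ultimately have "e' = pe u"
    using last_edge parent_edge_eq[OF u] by (simp add: insert_commute)
  moreover have "e \<in> path_edges (root_path u)"
    using e u_path by (simp add: path_edges_rev)
  ultimately show "\<exists>u \<in> V - {r}. e' = pe u \<and> e \<in> path_edges (root_path u)"
    using u by blast
next
  assume "\<exists>u \<in> V - {r}. e' = pe u \<and> e \<in> path_edges (root_path u)"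
  then obtain u where u: "u \<in> V" "u \<noteq> r" and e': "e' = pe u" and e: "e \<in> path_edges (root_path u)"
    by blast
  define xs where "xs = rev (root_path u)"
  have "2 \<le> length xs"
    using length_root_path[OF u] by (simp add: xs_def)
  moreover have "{xs ! (length xs - 2), xs ! (length xs - 1)} = e'"
    using length_root_path[OF u] root_path_nth_0[OF u(1)] parent_edge_eq[OF u] e'
    by (simp add: xs_def rev_nth parent_def numeral_2_eq_2 Suc_diff_Suc insert_commute)
  moreover have "is_path E xs" and "hd xs = r" and "e \<in> path_edges xs"
    using root_path_spec[OF u(1)] root_path_not_Nil[OF u(1)] e
    by (simp_all add: xs_def is_path_rev hd_rev path_edges_rev)
  ultimately show "below E r e e'"
    unfolding below_def by blast
qed

lemma nth_not_in_later_drop: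
  assumes "distinct xs" and "i < length xs"
  shows "xs ! i \<notin> set (drop (Suc i) xs)"
proof
  assume "xs ! i \<in> set (drop (Suc i) xs)"
  then obtain j where "j < length xs - Suc i" and "xs ! (Suc i + j) = xs ! i"
    by (auto simp: in_set_conv_nth)
  then show False
    using assms nth_eq_iff_index_eq[of xs "Suc i + j" i] by (simp add: less_diff_conv)
qed

lemma parent_edge_in_root_path_iff:
  assumes b: "b \<in> V" "b \<noteq> r" and u: "u \<in> V"
  shows "pe b \<in> path_edges (root_path u) \<longleftrightarrow> u \<in> subtree b"
proof
  assume "u \<in> subtree b"
  then obtain zs where "root_path u = zs @ root_path b"
    unfolding subtree_def by (auto elim: suffixE)
  then have "path_edges (root_path b) \<subseteq> path_edges (root_path u)"
    using path_edges_drop[of "length zs" "root_path u"] by simp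
  moreover have "pe b \<in> path_edges (root_path b)"
    using length_root_path[OF b] parent_edge_eq[OF b] root_path_nth_0[OF b(1)]
    unfolding path_edges_iff parent_def by (intro exI[of _ 0]) simp
  ultimately show "pe b \<in> path_edges (root_path u)"
    by blast
next
  let ?P = "root_path u"
  assume "pe b \<in> path_edges ?P"
  then obtain i where i: "Suc i < length ?P" and edge: "{b, parent b} = {?P ! i, ?P ! Suc i}"
    using parent_edge_eq[OF b] unfolding path_edges_iff by auto
  have suffix_root_path: "root_path b = drop k ?P" if "k < length ?P" and "?P ! k = b" for k
    using root_path_suffix[OF u suffix_drop[of k ?P]] that by (simp add: hd_drop_conv_nth)
  have "?P ! i = b"
  proof (rule ccontr)
    assume "?P ! i \<noteq> b"
    then have "?P ! Suc i = b" and "?P ! i = parent b"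
      using edge by (auto simp: doubleton_eq_iff)
    then have "?P ! i \<in> set (root_path b)"
      using length_root_path[OF b] unfolding parent_def by simp
    then show False
      using suffix_root_path[OF i \<open>?P ! Suc i = b\<close>] nth_not_in_later_drop[OF distinct_root_path[OF u]] i
      by simp
  qed
  then show "u \<in> subtree b"
    using suffix_root_path[of i] i u unfolding subtree_def by (simp add: suffix_drop)
qed

lemma below_parent_edge_iff:
  assumes "b \<in> V" "b \<noteq> r" and "u \<in> V" "u \<noteq> r"
  shows "below E r (pe b) (pe u) \<longleftrightarrow> u \<in> subtree b"
  using assms below_iff_root_path parent_edge_in_root_path_iff inj_onD[OF parent_edge_inj]
  by (metis Diff_iff singletonD)

lemma children_subset: "v \<in> V \<Longrightarrow> children v \<subseteq> V - {r}"
  using child_not_root unfolding children_def by blast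

lemma subtree_child_subset: "u \<in> children w \<Longrightarrow> subtree u \<subseteq> subtree w"
  unfolding subtree_def children_def by (auto dest: suffix_ConsD)

(* A vertex function f stands for the edge assignment with value f v on the parent edge of v. *)
definition consistent_on :: "'v set \<Rightarrow> ('v \<Rightarrow> 'g::ab_group_add) \<Rightarrow> bool" where
  "consistent_on S f \<longleftrightarrow> (\<forall>v \<in> S. interior_vertex V E r v \<longrightarrow> f v = (\<Sum>u\<in>children v. f u))"

lemma consistent_assignment_iff:
  "consistent_assignment V E r h \<longleftrightarrow> consistent_on V (\<lambda>v. h (pe v))"
proof -
  have "(\<Sum>c\<in>child_edges E r v. h c) = (\<Sum>u\<in>children v. h (pe u))" if "v \<in> V" "v \<noteq> r" for v
  proof -
    have "inj_on pe (children v)"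
      using inj_on_subset[OF parent_edge_inj children_subset[OF that(1)]] .
    then show ?thesis
      by (simp add: child_edges_eq[OF that] sum.reindex)
  qed
  then show ?thesis
    unfolding consistent_assignment_def consistent_on_def interior_vertex_def by auto
qed

lemma consistent_on_subset: "consistent_on T f \<Longrightarrow> S \<subseteq> T \<Longrightarrow> consistent_on S f"
  unfolding consistent_on_def by blast

lemma consistent_on_cong:
  assumes "consistent_on S f" and "\<And>x. x \<in> V - {r} \<Longrightarrow> f' x = f x"
  shows "consistent_on S f'"
  unfolding consistent_on_def
proof (intro ballI impI)
  fix v
  assume "v \<in> S" and v: "interior_vertex V E r v"
  then have "v \<in> V - {r}"
    unfolding interior_vertex_def by blast
  then have "f' u = f u" if "u \<in> children v" for u
    using that children_subset assms(2) by blast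
  moreover have "f v = (\<Sum>u\<in>children v. f u)"
    using assms(1) \<open>v \<in> S\<close> v unfolding consistent_on_def by blast
  ultimately show "f' v = (\<Sum>u\<in>children v. f' u)"
    using assms(2) \<open>v \<in> V - {r}\<close> by simp
qed

lemma consistent_on_patch:
  assumes b: "b \<in> V" and f1: "consistent_on (subtree b) f1" and f2: "consistent_on V f2"
    and "f1 b = f2 b"
  shows "consistent_on V (\<lambda>x. if x \<in> subtree b then f1 x else f2 x)"
  unfolding consistent_on_def
proof (intro ballI impI)
  fix v
  assume v: "v \<in> V" "interior_vertex V E r v"
  let ?f = "\<lambda>x. if x \<in> subtree b then f1 x else f2 x"
  show "?f v = (\<Sum>u\<in>children v. ?f u)"
  proof (cases "v \<in> subtree b")
    case True
    then have "?f v = f1 v"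
      by simp
    also have "\<dots> = (\<Sum>u\<in>children v. f1 u)"
      using f1 True v(2) unfolding consistent_on_def by blast
    also have "\<dots> = (\<Sum>u\<in>children v. ?f u)"
      using True child_in_subtree by (intro sum.cong) auto
    finally show ?thesis .
  next
    case False
    have "f2 u = ?f u" if "u \<in> children v" for u
    proof (cases "u \<in> subtree b")
      case True
      then have "u = b"
        using False child_in_subtree_cases[OF b v(1) that] by blast
      then show ?thesis
        using \<open>f1 b = f2 b\<close> True by simp
    qed simp
    have "?f v = f2 v"
      using False by simp
    also have "\<dots> = (\<Sum>u\<in>children v. f2 u)"
      using f2 v unfolding consistent_on_def by blast
    also have "\<dots> = (\<Sum>u\<in>children v. ?f u)"
      using \<open>\<And>u. u \<in> children v \<Longrightarrow> f2 u = ?f u\<close> by (rule sum.cong[OF refl])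
    finally show ?thesis .
  qed
qed

definition graft :: "'v \<Rightarrow> 'g \<Rightarrow> ('v \<Rightarrow> 'v \<Rightarrow> 'g) \<Rightarrow> 'v \<Rightarrow> 'g" where
  "graft w g F x = (if x = w then g else F (THE u. u \<in> children w \<and> x \<in> subtree u) x)"

lemma graft_in_child_subtree:
  assumes "u \<in> children w" and "x \<in> subtree u"
  shows "graft w g F x = F u x"
proof -
  have "x \<noteq> w"
    using parent_not_in_child_subtree[OF assms(1)] assms(2) by blast
  moreover have "(THE u. u \<in> children w \<and> x \<in> subtree u) = u"
  proof (rule the_equality)
    show "u \<in> children w \<and> x \<in> subtree u"
      using assms by blast
    fix u'
    assume "u' \<in> children w \<and> x \<in> subtree u'"
    then show "u' = u"
      using subtree_child_unique[of u' w u x] assms by blast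
  qed
  ultimately show ?thesis
    unfolding graft_def by simp
qed

lemma consistent_on_graft:
  assumes w: "w \<in> V" and F: "\<And>u. u \<in> children w \<Longrightarrow> consistent_on (subtree u) (F u)"
    and g: "interior_vertex V E r w \<Longrightarrow> (\<Sum>u\<in>children w. F u u) = g"
  shows "consistent_on (subtree w) (graft w g F)"
  unfolding consistent_on_def
proof (intro ballI impI)
  fix v
  assume v: "v \<in> subtree w" "interior_vertex V E r v"
  show "graft w g F v = (\<Sum>u\<in>children v. graft w g F u)"
  proof (cases "v = w")
    case True
    have "F u u = graft w g F u" if "u \<in> children w" for u
    proof -
      have "u \<in> V"
        using that unfolding children_def by blast
      show ?thesis
        using graft_in_child_subtree[OF that self_in_subtree[OF \<open>u \<in> V\<close>]] by (rule sym)
    qed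
    have "graft w g F v = g"
      using True unfolding graft_def by simp
    also have "\<dots> = (\<Sum>u\<in>children w. F u u)"
      using True g v(2) by simp
    also have "\<dots> = (\<Sum>u\<in>children v. graft w g F u)"
      unfolding True using \<open>\<And>u. u \<in> children w \<Longrightarrow> F u u = graft w g F u\<close>
      by (rule sum.cong[OF refl])
    finally show ?thesis .
  next
    case False
    then obtain u where u: "u \<in> children w" "v \<in> subtree u"
      using subtree_cases[OF w v(1)] by blast
    have "graft w g F v = F u v"
      using graft_in_child_subtree[OF u] .
    also have "\<dots> = (\<Sum>c\<in>children v. F u c)"
      using F[OF u(1)] u(2) v(2) unfolding consistent_on_def by blast
    also have "\<dots> = (\<Sum>c\<in>children v. graft w g F c)"
      using graft_in_child_subtree[OF u(1) child_in_subtree[OF u(2)], symmetric]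
      by (rule sum.cong[OF refl])
    finally show ?thesis .
  qed
qed

lemma friendly_children_values:
  fixes L :: "'g::ab_group_add \<Rightarrow> 'l"
  assumes "friendly L" and w: "w \<in> V" "w \<noteq> r" and f: "consistent_on {w} f" and "L g = L (f w)"
  obtains y where "\<And>u. u \<in> children w \<Longrightarrow> L (y u) = L (f u)"
    and "interior_vertex V E r w \<Longrightarrow> (\<Sum>u\<in>children w. y u) = g"
proof (cases "interior_vertex V E r w")
  case True
  then have "children w \<noteq> {}"
    using interior_vertex_iff_children[OF w] by blast
  moreover have "finite (children w)"
    using finite_V unfolding children_def by simp
  moreover have "L g = L (\<Sum>u\<in>children w. f u)"
    using f True \<open>L g = L (f w)\<close> unfolding consistent_on_def by simp
  ultimately show ?thesis
    using friendly_sum[OF assms(1)] that by metis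
qed (use that[of f] in blast)

lemma relabel_subtree:
  fixes L :: "'g::ab_group_add \<Rightarrow> 'l"
  assumes "friendly L" and "w \<in> V" and "w \<noteq> r"
    and "consistent_on (subtree w) f" and "L g = L (f w)"
  shows "\<exists>f'. f' w = g \<and> (\<forall>x \<in> subtree w. L (f' x) = L (f x)) \<and> consistent_on (subtree w) f'"
  using assms(2-)
proof (induction "card V - length (root_path w)" arbitrary: w g rule: less_induct)
  case less
  have "consistent_on {w} f"
    using less.prems(1,3) self_in_subtree consistent_on_subset by blast
  then obtain y where y_labels: "\<And>u. u \<in> children w \<Longrightarrow> L (y u) = L (f u)"
    and y_sum: "interior_vertex V E r w \<Longrightarrow> (\<Sum>u\<in>children w. y u) = g"
    using friendly_children_values[OF assms(1) less.prems(1,2)] less.prems(4) by blast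
  have "\<exists>F. F u = y u \<and> (\<forall>x \<in> subtree u. L (F x) = L (f x)) \<and> consistent_on (subtree u) F"
    if u: "u \<in> children w" for u
  proof (rule less.hyps)
    show "u \<in> V" and "u \<noteq> r"
      using u child_not_root less.prems(1) unfolding children_def by auto
    show "card V - length (root_path u) < card V - length (root_path w)"
      using u length_root_path_le_card[OF \<open>u \<in> V\<close>] unfolding children_def by simp
    show "consistent_on (subtree u) f"
      using less.prems(3) subtree_child_subset[OF u] by (rule consistent_on_subset)
    show "L (y u) = L (f u)"
      using y_labels[OF u] .
  qed
  then obtain F where F: "\<And>u. u \<in> children w \<Longrightarrow> F u u = y u"
    "\<And>u x. u \<in> children w \<Longrightarrow> x \<in> subtree u \<Longrightarrow> L (F u x) = L (f x)"
    "\<And>u. u \<in> children w \<Longrightarrow> consistent_on (subtree u) (F u)"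
    by metis
  have "L (graft w g F x) = L (f x)" if x: "x \<in> subtree w" for x
  proof (cases "x = w")
    case False
    then obtain u where "u \<in> children w" and "x \<in> subtree u"
      using subtree_cases[OF less.prems(1) x] by blast
    then show ?thesis
      using F(2) graft_in_child_subtree by metis
  qed (simp add: graft_def less.prems(4))
  moreover have "consistent_on (subtree w) (graft w g F)"
    using less.prems(1) F(3) y_sum F(1) by (intro consistent_on_graft) simp_all
  ultimately show ?case
    by (intro exI[of _ "graft w g F"]) (simp add: graft_def)
qed

lemma glue_at_parent_edge:
  assumes "b \<in> V" "b \<noteq> r" and "x \<in> V" "x \<noteq> r"
  shows "glue E r (pe b) lam1 lam2 (pe x) = (if x \<in> subtree b then lam1 (pe x) else lam2 (pe x))"
  using below_parent_edge_iff[OF assms] parent_edge_in_E[OF assms(3,4)] unfolding glue_def by simp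

lemma glue_in_consistent_labelings:
  fixes L :: "'g::ab_group_add \<Rightarrow> 'l"
  assumes "friendly L" and "e \<in> E"
    and lam1: "lam1 \<in> consistent_labelings V E r L" and lam2: "lam2 \<in> consistent_labelings V E r L"
    and "lam1 e = lam2 e"
  shows "glue E r e lam1 lam2 \<in> consistent_labelings V E r L"
proof -
  obtain h1 h2 where h: "consistent_assignment V E r h1" "consistent_assignment V E r h2"
    and lam: "lam1 = (\<lambda>e'\<in>E. L (h1 e'))" "lam2 = (\<lambda>e'\<in>E. L (h2 e'))"
    using lam1 lam2 unfolding consistent_labelings_def by blast
  obtain b where b: "b \<in> V" "b \<noteq> r" and e: "e = pe b"
    using edge_is_parent_edge[OF assms(2)] by blast
  define f1 where "f1 v = h1 (pe v)" for v
  define f2 where "f2 v = h2 (pe v)" for v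
  have f: "consistent_on V f1" "consistent_on V f2"
    using h unfolding consistent_assignment_iff f1_def f2_def .
  have "L (f2 b) = L (f1 b)"
    using assms(2,5) lam e unfolding f1_def f2_def by simp
  then obtain f1' where f1': "f1' b = f2 b" "\<forall>x \<in> subtree b. L (f1' x) = L (f1 x)"
    "consistent_on (subtree b) f1'"
    using relabel_subtree[OF assms(1) b consistent_on_subset[OF f(1)]]
    unfolding subtree_def by blast
  define F where "F x = (if x \<in> subtree b then f1' x else f2 x)" for x
  define H where "H e' = F (inv_into (V - {r}) pe e')" for e'
  have H_pe: "H (pe x) = F x" if "x \<in> V - {r}" for x
    using inv_into_f_f[OF parent_edge_inj that] unfolding H_def by simp
  have "consistent_on V F"
    unfolding F_def using consistent_on_patch[OF b(1) f1'(3) f(2) f1'(1)] .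
  then have "consistent_assignment V E r H"
    unfolding consistent_assignment_iff using H_pe by (rule consistent_on_cong)
  moreover have "glue E r e lam1 lam2 = (\<lambda>e'\<in>E. L (H e'))"
  proof
    fix e'
    show "glue E r e lam1 lam2 e' = (\<lambda>e'\<in>E. L (H e')) e'"
    proof (cases "e' \<in> E")
      case True
      then obtain x where x: "x \<in> V" "x \<noteq> r" and e': "e' = pe x"
        using edge_is_parent_edge by blast
      have "glue E r e lam1 lam2 e' = (if x \<in> subtree b then lam1 e' else lam2 e')"
        using glue_at_parent_edge[OF b x] unfolding e e' .
      moreover have "L (H e') = (if x \<in> subtree b then L (f1 x) else L (f2 x))"
        using H_pe x f1'(2) unfolding e' F_def by simp
      ultimately show ?thesis
        using True unfolding lam f1_def f2_def e' by simp
    qed (simp add: glue_def)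
  qed
  ultimately show ?thesis
    unfolding consistent_labelings_def by blast
qed

end

lemma Var_times_Var:
  "Var a * Var b = Poly_Mapping.single (Poly_Mapping.single a 1 + Poly_Mapping.single b 1) (1::complex)"
  by (simp add: Var_def mult_single)

lemma vars_diff_subset: "vars (p - q) \<subseteq> vars p \<union> vars q"
proof -
  have "Poly_Mapping.keys (p - q) \<subseteq> Poly_Mapping.keys p \<union> Poly_Mapping.keys q"
    by (auto simp: in_keys_iff lookup_minus)
  then show ?thesis
    unfolding vars_def by blast
qed

lemma vars_Var_times_Var: "vars (Var a * Var b) \<subseteq> {a, b}"
  using keys_add[of "Poly_Mapping.single a (1::nat)" "Poly_Mapping.single b 1"]
  by (auto simp: Var_times_Var vars_def)

lemma prod_monomial_two:
  fixes f :: "'x \<Rightarrow> 'y cpoly" and a b :: 'x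
  defines "m \<equiv> Poly_Mapping.single a 1 + Poly_Mapping.single b (1::nat)"
  shows "(\<Prod>x\<in>Poly_Mapping.keys m. f x ^ Poly_Mapping.lookup m x) = f a * f b"
proof (cases "a = b")
  case True
  then have "m = Poly_Mapping.single a (1 + 1)"
    unfolding m_def by (simp only: single_add)
  then show ?thesis
    using True by (simp add: power2_eq_square)
next
  case False
  then have "Poly_Mapping.keys m = {a, b}"
    by (auto simp: m_def in_keys_iff lookup_add lookup_single when_def split: if_splits)
  then show ?thesis
    using False by (simp add: m_def lookup_add lookup_single when_def)
qed

lemma subst_hom_binomial:
  "subst_hom f (Var a * Var b - Var c * Var d) = f a * f b - f c * f d"
proof -
  define m1 where "m1 = Poly_Mapping.single a 1 + Poly_Mapping.single b (1::nat)"
  define m2 where "m2 = Poly_Mapping.single c 1 + Poly_Mapping.single d (1::nat)"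
  define F where "F m = (\<Prod>x\<in>Poly_Mapping.keys m. f x ^ Poly_Mapping.lookup m x)" for m
  have binomial: "Var a * Var b - Var c * Var d
      = Poly_Mapping.single m1 1 - Poly_Mapping.single m2 (1::complex)"
    by (simp add: Var_times_Var m1_def m2_def)
  have F1: "F m1 = f a * f b" and F2: "F m2 = f c * f d"
    unfolding F_def m1_def m2_def by (rule prod_monomial_two)+
  show ?thesis
  proof (cases "m1 = m2")
    case True
    then show ?thesis
      using binomial F1 F2 by (simp add: subst_hom_def)
  next
    case False
    define q where "q = Poly_Mapping.single m1 1 - Poly_Mapping.single m2 (1::complex)"
    have keys: "Poly_Mapping.keys q = {m1, m2}"
      using False by (auto simp: q_def in_keys_iff lookup_minus lookup_single when_def split: if_splits)
    have "subst_hom f q = Poly_Mapping.single 0 (Poly_Mapping.lookup q m1) * F m1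
        + Poly_Mapping.single 0 (Poly_Mapping.lookup q m2) * F m2"
      unfolding subst_hom_def keys F_def using False by simp
    also have "\<dots> = F m1 - F m2"
      using False by (simp add: q_def lookup_minus lookup_single single_uminus)
    finally show ?thesis
      using binomial F1 F2 q_def by simp
  qed
qed

lemma param_map_swap:
  assumes "\<And>x. x \<in> E \<Longrightarrow> (a x = c x \<and> b x = d x) \<or> (a x = d x \<and> b x = c x)"
  shows "param_map E a * param_map E b = param_map E c * param_map E d"
proof -
  have "Var (x, a x) * Var (x, b x) = Var (x, c x) * Var (x, d x)" if "x \<in> E" for x
    using assms[OF that] by (auto simp: mult.commute)
  then show ?thesis
    unfolding param_map_def prod.distrib[symmetric] by (rule prod.cong[OF refl])
qed

theorem lemma4p2:
  fixes V :: "'v set" and E :: "'v set set" and \<rho> :: 'v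
    and L :: "'g::{ab_group_add, finite} \<Rightarrow> 'l::finite"
    and e :: "'v set" and lam1 lam2 :: "'v set \<Rightarrow> 'l"
  assumes "friendly L"
    and "rooted_tree V E \<rho>"
    and "interior_edge V E \<rho> e"
    and "lam1 \<in> consistent_labelings V E \<rho> L"
    and "lam2 \<in> consistent_labelings V E \<rho> L"
    and "lam1 e = lam2 e"
  shows "glue E \<rho> e lam1 lam2 \<in> consistent_labelings V E \<rho> L
    \<and> glue E \<rho> e lam2 lam1 \<in> consistent_labelings V E \<rho> L
    \<and> Var lam1 * Var lam2 - Var (glue E \<rho> e lam1 lam2) * Var (glue E \<rho> e lam2 lam1)
        \<in> toric_ideal V E \<rho> L"
proof -
  interpret tree_with_root_edge V E \<rho>
    using assms(2) by unfold_locales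
  have "e \<in> E"
    using assms(3) unfolding interior_edge_def by blast
  let ?lam12 = "glue E \<rho> e lam1 lam2" and ?lam21 = "glue E \<rho> e lam2 lam1"
  have glued: "?lam12 \<in> consistent_labelings V E \<rho> L" "?lam21 \<in> consistent_labelings V E \<rho> L"
    using glue_in_consistent_labelings[OF assms(1) \<open>e \<in> E\<close>] assms(4-6) by simp_all
  let ?p = "Var lam1 * Var lam2 - Var ?lam12 * Var ?lam21"
  have "vars ?p \<subseteq> {lam1, lam2} \<union> {?lam12, ?lam21}"
    by (rule subset_trans[OF vars_diff_subset Un_mono[OF vars_Var_times_Var vars_Var_times_Var]])
  then have "vars ?p \<subseteq> consistent_labelings V E \<rho> L"
    using glued assms(4,5) by blast
  moreover have "param_map E lam1 * param_map E lam2 = param_map E ?lam12 * param_map E ?lam21"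
    by (rule param_map_swap) (simp add: glue_def)
  then have "subst_hom (param_map E) ?p = 0"
    by (simp add: subst_hom_binomial)
  ultimately show ?thesis
    using glued unfolding toric_ideal_def by blast
qed

end
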